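(* For every (nondeterministic B\"uchi) automaton $\mathcal{A}$ over $\Sigma$ there exists a deterministic B\"uchi automaton $\mathcal{D}$ such that $\mathfrak{J}(\mathcal{A})=\mathfrak{J}(\mathcal{D})$.
   Context: An automaton $\langle\Sigma,Q,\delta,Q_0,\alpha\rangle$ accepts an infinite word if some run visits $\alpha$ infinitely often; it is deterministic if $|Q_0|=1$ and $|\delta(q,\sigma)|=1$ for all $q,\sigma$. For $w\in\Sigma^\omega$, $\Psi(w)\in\mathbb{N}_\infty^\Sigma$ gives the number of occurrences of each letter ($\infty$ if infinite); $w\sim w'$ iff $\Psi(w)=\Psi(w')$; $\mathfrak{J}(\mathcal{A})=\{w\in\Sigma^\omega:\exists w'\sim w,\ w'\in\mathfrak{L}(\mathcal{A})\}$. *)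

theory Defs
  imports Main "HOL-Library.Extended_Nat"
begin

datatype ('a, 'q) automaton =
  Automaton (alph: "'a set") (states: "'q set") (trans: "'q \<Rightarrow> 'a \<Rightarrow> 'q set")
            (init: "'q set") (acc: "'q set")

definition well_formed :: "('a, 'q) automaton \<Rightarrow> bool" where
  "well_formed A \<longleftrightarrow> finite (alph A) \<and> finite (states A) \<and> init A \<subseteq> states A
     \<and> acc A \<subseteq> states A
     \<and> (\<forall>q\<in>states A. \<forall>\<sigma>\<in>alph A. trans A q \<sigma> \<subseteq> states A)"

definition deterministic :: "('a, 'q) automaton \<Rightarrow> bool" where
  "deterministic A \<longleftrightarrow> card (init A) = 1
     \<and> (\<forall>q\<in>states A. \<forall>\<sigma>\<in>alph A. card (trans A q \<sigma>) = 1)"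

definition omega_words :: "'a set \<Rightarrow> (nat \<Rightarrow> 'a) set" where
  "omega_words \<Sigma> = {w. range w \<subseteq> \<Sigma>}"

definition is_run :: "('a, 'q) automaton \<Rightarrow> (nat \<Rightarrow> 'a) \<Rightarrow> (nat \<Rightarrow> 'q) \<Rightarrow> bool" where
  "is_run A w r \<longleftrightarrow> r 0 \<in> init A \<and> (\<forall>i. r (Suc i) \<in> trans A (r i) (w i))"

definition accepting :: "('a, 'q) automaton \<Rightarrow> (nat \<Rightarrow> 'q) \<Rightarrow> bool" where
  "accepting A r \<longleftrightarrow> (\<exists>\<^sub>\<infinity> i. r i \<in> acc A)"

definition lang :: "('a, 'q) automaton \<Rightarrow> (nat \<Rightarrow> 'a) set" where
  "lang A = {w \<in> omega_words (alph A). \<exists>r. is_run A w r \<and> accepting A r}"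

definition parikh :: "(nat \<Rightarrow> 'a) \<Rightarrow> 'a \<Rightarrow> enat" where
  "parikh w \<sigma> = (if finite {i. w i = \<sigma>} then enat (card {i. w i = \<sigma>}) else \<infinity>)"

definition jumping_lang :: "('a, 'q) automaton \<Rightarrow> (nat \<Rightarrow> 'a) set" where
  "jumping_lang A = {w \<in> omega_words (alph A). \<exists>w'. parikh w' = parikh w \<and> w' \<in> lang A}"

end

theory Submission
  imports Defs "HOL-Library.Omega_Words_Fun" "HOL-Library.FuncSet"
begin

text \<open>
  Every infinite word w is Parikh equivalent to the lasso \<open>u \<frown> cs\<^sup>\<omega>\<close>, where I is the set
  of letters occurring infinitely often in w, cs enumerates I, and u lists the finitely many
  remaining occurrences in order. Call such a lasso good if A can read some word whose letters
  outside I spell u, the letters of I being interleaved arbitrarily, and thereby reach a state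
  from which an accepting run reads only letters of I, each of them infinitely often. The lasso
  of an accepted word is good, and every good lasso is Parikh equivalent to an accepted word,
  so the good lassos have the same Parikh image as A. For fixed I they form a deterministic
  Buchi language: a subset construction follows u, and afterwards the automaton insists on
  reading \<open>cs\<^sup>\<omega>\<close>. The product of these automata over all nonempty \<open>I \<subseteq> \<Sigma>\<close> is the
  required deterministic automaton.
\<close>

section \<open>Runs and finite paths\<close>

definition trans_run :: "('a, 'q) automaton \<Rightarrow> 'a word \<Rightarrow> 'q word \<Rightarrow> bool" where
  "trans_run A w r \<longleftrightarrow> (\<forall>i. r (Suc i) \<in> trans A (r i) (w i))"

lemma is_run_iff_trans_run: "is_run A w r \<longleftrightarrow> r 0 \<in> init A \<and> trans_run A w r"
  by (simp add: is_run_def trans_run_def)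

lemma trans_run_suffix: "trans_run A w r \<Longrightarrow> trans_run A (suffix n w) (suffix n r)"
  by (simp add: trans_run_def)

lemma accepting_suffix: "accepting A (suffix n r) \<longleftrightarrow> accepting A r"
  unfolding accepting_def cofinite_eq_sequentially frequently_def
  by (simp add: eventually_sequentially_seg[of "\<lambda>i. r i \<notin> acc A" n] add.commute)

lemma run_in_states:
  assumes "well_formed A" and "w \<in> omega_words (alph A)" and "is_run A w r"
  shows "r i \<in> states A"
proof (induction i)
  case 0
  show ?case using assms by (auto simp: well_formed_def is_run_def)
next
  case (Suc i)
  have "w i \<in> alph A" using assms(2) by (auto simp: omega_words_def)
  then show ?case using assms(1,3) Suc unfolding well_formed_def is_run_def by blast
qed

lemma well_formed_finite_subset: "well_formed A \<Longrightarrow> I \<subseteq> alph A \<Longrightarrow> finite I"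
  unfolding well_formed_def using finite_subset by blast

fun path :: "('a, 'q) automaton \<Rightarrow> 'q \<Rightarrow> 'a list \<Rightarrow> 'q \<Rightarrow> bool" where
  "path A p [] q \<longleftrightarrow> q = p"
| "path A p (a # x) q \<longleftrightarrow> (\<exists>p'\<in>trans A p a. path A p' x q)"

lemma path_append: "path A p (x @ y) q \<longleftrightarrow> (\<exists>p'. path A p x p' \<and> path A p' y q)"
  by (induction x arbitrary: p) auto

lemma path_in_states:
  assumes "well_formed A" and "p \<in> states A" and "set x \<subseteq> alph A" and "path A p x q"
  shows "q \<in> states A"
  using assms(2-)
proof (induction x arbitrary: p)
  case (Cons a x)
  then obtain p' where "p' \<in> trans A p a" and "path A p' x q" by auto
  moreover have "p' \<in> states A"
    using assms(1) Cons.prems \<open>p' \<in> trans A p a\<close> unfolding well_formed_def by force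
  ultimately show ?case using Cons by auto
qed simp

lemma trans_run_imp_path: "trans_run A w r \<Longrightarrow> path A (r 0) (prefix n w) (r n)"
  by (induction n) (auto simp: path_append trans_run_def)

lemma path_conc_trans_run:
  assumes "path A p x q" and "trans_run A t r" and "r 0 = q"
  obtains r' where "r' 0 = p" and "trans_run A (x \<frown> t) r'" and "suffix (length x) r' = r"
  using assms(1)
proof (induction x arbitrary: p thesis)
  case Nil
  then show ?case using assms(2,3) by (metis conc_empty list.size(3) path.simps(1) suffix_0)
next
  case (Cons a x)
  then obtain p' where p': "p' \<in> trans A p a" "path A p' x q" by auto
  then obtain r' where r': "r' 0 = p'" "trans_run A (x \<frown> t) r'" "suffix (length x) r' = r"
    using Cons.IH by blast
  have "trans_run A ((a # x) \<frown> t) (p ## r')"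
    unfolding trans_run_def
  proof
    fix i show "(p ## r') (Suc i) \<in> trans A ((p ## r') i) (((a # x) \<frown> t) i)"
      using p' r' by (cases i) (auto simp: trans_run_def)
  qed
  moreover have "suffix (length (a # x)) (p ## r') = r"
    using r'(3) by (auto simp: suffix_def)
  ultimately show ?case using Cons.prems(1) by (metis build.simps(1))
qed

section \<open>Deterministic automata, products and renaming of states\<close>

lemma deterministic_init: "deterministic A \<Longrightarrow> init A = {the_elem (init A)}"
  unfolding deterministic_def by (metis is_singleton_altdef is_singleton_the_elem)

lemma deterministic_trans:
  "deterministic A \<Longrightarrow> q \<in> states A \<Longrightarrow> \<sigma> \<in> alph A \<Longrightarrow> trans A q \<sigma> = {the_elem (trans A q \<sigma>)}"
  unfolding deterministic_def by (metis is_singleton_altdef is_singleton_the_elem)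

definition det_run :: "('a, 'q) automaton \<Rightarrow> 'a word \<Rightarrow> 'q word" where
  "det_run A w = rec_nat (the_elem (init A)) (\<lambda>i q. the_elem (trans A q (w i)))"

lemma det_run_0: "det_run A w 0 = the_elem (init A)"
  and det_run_Suc: "det_run A w (Suc i) = the_elem (trans A (det_run A w i) (w i))"
  by (simp_all add: det_run_def)

context
  fixes A :: "('a, 'q) automaton" and w :: "'a word"
  assumes wf: "well_formed A" and det: "deterministic A" and w: "w \<in> omega_words (alph A)"
begin

lemma det_run_in_states: "det_run A w i \<in> states A"
proof (induction i)
  case 0
  show ?case using wf deterministic_init[OF det] by (auto simp: well_formed_def det_run_0)
next
  case (Suc i)
  have "w i \<in> alph A" using w by (auto simp: omega_words_def)
  then have "the_elem (trans A (det_run A w i) (w i)) \<in> trans A (det_run A w i) (w i)"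
    using deterministic_trans[OF det Suc] by (metis singletonI)
  then show ?case
    using wf Suc \<open>w i \<in> alph A\<close> unfolding well_formed_def det_run_Suc by blast
qed

lemma is_run_iff_det_run: "is_run A w r \<longleftrightarrow> r = det_run A w"
proof -
  have init: "init A = {det_run A w 0}"
    using deterministic_init[OF det] by (simp add: det_run_0)
  have step: "trans A (det_run A w i) (w i) = {det_run A w (Suc i)}" for i
    using deterministic_trans[OF det det_run_in_states, of "w i"] w
    by (auto simp: omega_words_def det_run_Suc)
  show ?thesis
  proof
    assume run: "is_run A w r"
    show "r = det_run A w"
    proof
      fix i show "r i = det_run A w i"
      proof (induction i)
        case 0
        show ?case using run init by (simp add: is_run_def)
      next
        case (Suc i)
        have "r (Suc i) \<in> trans A (r i) (w i)" using run by (simp add: is_run_def)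
        then show ?case using Suc step by simp
      qed
    qed
  qed (simp add: is_run_def init step)
qed

end

lemma lang_deterministic:
  assumes "well_formed A" and "deterministic A"
  shows "lang A = {w \<in> omega_words (alph A). accepting A (det_run A w)}"
  using is_run_iff_det_run[OF assms] by (auto simp: lang_def)

definition prod_automaton ::
    "'a set \<Rightarrow> 'k set \<Rightarrow> ('k \<Rightarrow> ('a, 'q) automaton) \<Rightarrow> ('a, 'k \<Rightarrow> 'q) automaton" where
  "prod_automaton \<Sigma> K D = Automaton \<Sigma> (\<Pi>\<^sub>E k\<in>K. states (D k))
     (\<lambda>g \<sigma>. {\<lambda>k\<in>K. the_elem (trans (D k) (g k) \<sigma>)})
     {\<lambda>k\<in>K. the_elem (init (D k))}
     {g \<in> (\<Pi>\<^sub>E k\<in>K. states (D k)). \<exists>k\<in>K. g k \<in> acc (D k)}"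

lemma deterministic_prod_automaton: "deterministic (prod_automaton \<Sigma> K D)"
  by (simp add: deterministic_def prod_automaton_def)

lemma det_run_prod_automaton: "det_run (prod_automaton \<Sigma> K D) w i = (\<lambda>k\<in>K. det_run (D k) w i)"
  by (induction i) (simp_all add: prod_automaton_def det_run_0 det_run_Suc fun_eq_iff)

context
  fixes \<Sigma> :: "'a set" and K :: "'k set" and D :: "'k \<Rightarrow> ('a, 'q) automaton"
  assumes finite_alph: "finite \<Sigma>" and finite_index: "finite K"
    and components: "\<And>k. k \<in> K \<Longrightarrow> well_formed (D k) \<and> deterministic (D k) \<and> alph (D k) = \<Sigma>"
begin

lemma well_formed_prod_automaton: "well_formed (prod_automaton \<Sigma> K D)"
proof -
  have "finite (\<Pi>\<^sub>E k\<in>K. states (D k))"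
    using finite_index components by (intro finite_PiE) (auto simp: well_formed_def)
  moreover have "the_elem (init (D k)) \<in> states (D k)" if "k \<in> K" for k
    using components[OF that] deterministic_init[of "D k"] by (auto simp: well_formed_def)
  moreover have "the_elem (trans (D k) q \<sigma>) \<in> states (D k)"
    if "k \<in> K" and "q \<in> states (D k)" and "\<sigma> \<in> \<Sigma>" for k q \<sigma>
    using components[OF that(1)] deterministic_trans[of "D k" q \<sigma>] that
    unfolding well_formed_def by (metis insert_subset)
  ultimately show ?thesis
    using finite_alph by (auto simp: well_formed_def prod_automaton_def PiE_iff extensional_def)
qed

lemma lang_prod_automaton: "lang (prod_automaton \<Sigma> K D) = (\<Union>k\<in>K. lang (D k))"
proof -
  let ?P = "prod_automaton \<Sigma> K D"
  have "accepting ?P (det_run ?P w) \<longleftrightarrow> (\<exists>k\<in>K. accepting (D k) (det_run (D k) w))"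
    if w: "w \<in> omega_words \<Sigma>" for w
  proof -
    have "det_run ?P w i \<in> states ?P" for i
      using det_run_in_states[OF well_formed_prod_automaton deterministic_prod_automaton] w
      by (simp add: prod_automaton_def)
    then have "det_run ?P w i \<in> acc ?P \<longleftrightarrow> (\<exists>k\<in>K. det_run (D k) w i \<in> acc (D k))" for i
      unfolding det_run_prod_automaton by (auto simp: prod_automaton_def)
    then show ?thesis
      unfolding accepting_def using INFM_finite_Bex_distrib[OF finite_index] by simp
  qed
  moreover have "lang ?P = {w \<in> omega_words \<Sigma>. accepting ?P (det_run ?P w)}"
    using lang_deterministic[OF well_formed_prod_automaton deterministic_prod_automaton]
    by (simp add: prod_automaton_def)
  moreover have "lang (D k) = {w \<in> omega_words \<Sigma>. accepting (D k) (det_run (D k) w)}"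
    if "k \<in> K" for k
    using lang_deterministic[of "D k"] components[OF that] by simp
  ultimately show ?thesis by auto
qed

end

definition rename_states :: "('q \<Rightarrow> 'p) \<Rightarrow> ('a, 'q) automaton \<Rightarrow> ('a, 'p) automaton" where
  "rename_states f A = Automaton (alph A) (f ` states A)
     (\<lambda>p \<sigma>. f ` trans A (inv_into (states A) f p) \<sigma>) (f ` init A) (f ` acc A)"

lemma inv_into_image_mem: "inj_on f S \<Longrightarrow> X \<subseteq> S \<Longrightarrow> p \<in> f ` X \<Longrightarrow> inv_into S f p \<in> X"
  by (auto simp: inv_into_f_f)

context
  fixes f :: "'q \<Rightarrow> 'p" and A :: "('a, 'q) automaton"
  assumes wf: "well_formed A" and inj: "inj_on f (states A)"
begin

lemma well_formed_rename_states: "well_formed (rename_states f A)"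
  using wf inv_into_image_mem[OF inj order_refl]
  by (auto simp: well_formed_def rename_states_def) blast

lemma deterministic_rename_states: "deterministic A \<Longrightarrow> deterministic (rename_states f A)"
  using wf inv_into_image_mem[OF inj order_refl]
  unfolding deterministic_def well_formed_def rename_states_def
  by (auto simp: card_image inj_on_subset[OF inj])

lemma lang_rename_states: "lang (rename_states f A) = lang A"
proof (intro set_eqI iffI)
  fix w assume "w \<in> lang (rename_states f A)"
  then obtain r where w: "w \<in> omega_words (alph A)" and run: "is_run (rename_states f A) w r"
    and accepting: "accepting (rename_states f A) r"
    by (auto simp: lang_def rename_states_def)
  let ?g = "inv_into (states A) f"
  have "r i \<in> f ` states A" for i
    using run_in_states[OF well_formed_rename_states _ run] w by (simp add: rename_states_def)
  then have "?g (r i) \<in> states A" for i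
    using inv_into_image_mem[OF inj] by blast
  moreover have "w i \<in> alph A" for i using w by (auto simp: omega_words_def)
  ultimately have "is_run A w (?g \<circ> r)"
    using run wf inv_into_image_mem[OF inj] unfolding is_run_def well_formed_def
    by (auto simp: rename_states_def)
  moreover have "accepting A (?g \<circ> r)"
    using accepting wf inv_into_image_mem[OF inj]
    by (auto simp: accepting_def rename_states_def well_formed_def elim!: INFM_mono)
  ultimately show "w \<in> lang A" using w by (auto simp: lang_def)
next
  fix w assume "w \<in> lang A"
  then obtain r where w: "w \<in> omega_words (alph A)" and run: "is_run A w r"
    and accepting: "accepting A r"
    by (auto simp: lang_def)
  have "r i \<in> states A" for i using run_in_states[OF wf w run] .
  then have "is_run (rename_states f A) w (f \<circ> r)"
    using run inj by (auto simp: is_run_def rename_states_def inv_into_f_f)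
  moreover have "accepting (rename_states f A) (f \<circ> r)"
    using accepting by (auto simp: accepting_def rename_states_def elim!: INFM_mono)
  ultimately show "w \<in> lang (rename_states f A)"
    using w by (auto simp: lang_def rename_states_def)
qed

end

lemma deterministic_nat_states:
  assumes "well_formed A" and "deterministic A"
  obtains B :: "('a, nat) automaton"
  where "well_formed B" and "deterministic B" and "alph B = alph A" and "lang B = lang A"
proof -
  have "finite (states A)"
    using assms(1) by (simp add: well_formed_def)
  then obtain f :: "_ \<Rightarrow> nat" where inj: "inj_on f (states A)"
    by (meson finite_imp_inj_to_nat_seg)
  show thesis
  proof (rule that)
    show "well_formed (rename_states f A)"
      by (rule well_formed_rename_states[OF assms(1) inj])
    show "deterministic (rename_states f A)"
      by (rule deterministic_rename_states[OF assms(1) inj assms(2)])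
    show "alph (rename_states f A) = alph A"
      by (simp add: rename_states_def)
    show "lang (rename_states f A) = lang A"
      by (rule lang_rename_states[OF assms(1) inj])
  qed
qed

section \<open>Parikh vectors of lassos\<close>

lemma jumping_lang_eq_parikh_image:
  "jumping_lang A = {w \<in> omega_words (alph A). parikh w \<in> parikh ` lang A}"
  by (auto simp: jumping_lang_def) (metis image_eqI)

lemma parikh_eq_infinity_iff: "parikh w \<sigma> = \<infinity> \<longleftrightarrow> \<sigma> \<in> limit w"
  by (simp add: parikh_def limit_vimage vimage_def)

lemma parikh_conc_notin_range:
  assumes "\<sigma> \<notin> range s"
  shows "parikh (u \<frown> s) \<sigma> = enat (count_list u \<sigma>)"
proof -
  have "{i. (u \<frown> s) i = \<sigma>} = {i. i < length u \<and> u ! i = \<sigma>}"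
    using assms by (auto simp: conc_def) (metis rangeI)
  then show ?thesis
    by (simp add: parikh_def count_list_eq_length_filter length_filter_conv_card eq_commute)
qed

lemma count_list_filter: "P x \<Longrightarrow> count_list (filter P xs) x = count_list xs x"
  by (induction xs) auto

lemma parikh_conc_eq:
  assumes "range s \<subseteq> I" and "limit s = I" and "range t \<subseteq> I" and "limit t = I"
    and "filter (\<lambda>a. a \<notin> I) u = filter (\<lambda>a. a \<notin> I) v"
  shows "parikh (u \<frown> s) = parikh (v \<frown> t)"
proof
  fix \<sigma>
  show "parikh (u \<frown> s) \<sigma> = parikh (v \<frown> t) \<sigma>"
  proof (cases "\<sigma> \<in> I")
    case True
    then have "parikh (u \<frown> s) \<sigma> = \<infinity>" and "parikh (v \<frown> t) \<sigma> = \<infinity>"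
      using assms(2,4) by (simp_all add: parikh_eq_infinity_iff)
    then show ?thesis by simp
  next
    case False
    then have "count_list u \<sigma> = count_list v \<sigma>"
      using count_list_filter[of "\<lambda>a. a \<notin> I" \<sigma>] assms(5) by metis
    moreover have "\<sigma> \<notin> range s" and "\<sigma> \<notin> range t" using False assms(1,3) by auto
    ultimately show ?thesis by (simp add: parikh_conc_notin_range)
  qed
qed

section \<open>Reachability modulo a set of letters\<close>

definition post :: "('a, 'q) automaton \<Rightarrow> 'q set \<Rightarrow> 'a \<Rightarrow> 'q set" where
  "post A S \<sigma> = (\<Union>p\<in>S. trans A p \<sigma>)"

definition reach_within :: "('a, 'q) automaton \<Rightarrow> 'a set \<Rightarrow> 'q set \<Rightarrow> 'q set" where
  "reach_within A I S = {q. \<exists>p\<in>S. \<exists>y. set y \<subseteq> I \<and> path A p y q}"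

definition reach_modulo :: "('a, 'q) automaton \<Rightarrow> 'a set \<Rightarrow> 'a list \<Rightarrow> 'q set" where
  "reach_modulo A I u = {q. \<exists>p\<in>init A. \<exists>x. filter (\<lambda>a. a \<notin> I) x = u \<and> path A p x q}"

definition fair_states :: "('a, 'q) automaton \<Rightarrow> 'a set \<Rightarrow> 'q set" where
  "fair_states A I =
     {r 0 | t r. trans_run A t r \<and> range t \<subseteq> I \<and> limit t = I \<and> accepting A r}"

lemma post_subset:
  "well_formed A \<Longrightarrow> S \<subseteq> states A \<Longrightarrow> \<sigma> \<in> alph A \<Longrightarrow> post A S \<sigma> \<subseteq> states A"
  unfolding well_formed_def post_def by blast

lemma reach_within_subset:
  assumes "well_formed A" and "S \<subseteq> states A" and "I \<subseteq> alph A"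
  shows "reach_within A I S \<subseteq> states A"
  using assms path_in_states[OF assms(1)] by (force simp: reach_within_def)

lemma reach_modulo_Nil: "reach_modulo A I [] = reach_within A I (init A)"
  by (auto simp: reach_modulo_def reach_within_def filter_empty_conv)

lemma reach_modulo_snoc:
  assumes "\<sigma> \<notin> I"
  shows "reach_modulo A I (u @ [\<sigma>]) = reach_within A I (post A (reach_modulo A I u) \<sigma>)"
proof (intro set_eqI iffI)
  fix q assume "q \<in> reach_modulo A I (u @ [\<sigma>])"
  then obtain p x where p: "p \<in> init A" and x: "filter (\<lambda>a. a \<notin> I) x = u @ [\<sigma>]"
    and path: "path A p x q"
    by (auto simp: reach_modulo_def)
  have "filter (\<lambda>a. a \<notin> I) (rev x) = \<sigma> # rev u"
    using x by (simp add: rev_filter[symmetric])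
  then obtain y x1 where "rev x = y @ \<sigma> # x1" and "\<forall>a\<in>set y. a \<in> I"
    and "filter (\<lambda>a. a \<notin> I) x1 = rev u"
    by (auto simp: filter_eq_Cons_iff)
  then have "x = rev x1 @ \<sigma> # rev y" and u: "filter (\<lambda>a. a \<notin> I) (rev x1) = u"
    and "set (rev y) \<subseteq> I"
    by (auto simp: rev_filter[symmetric] rev_swap)
  moreover from this(1) path obtain p1 p2 where
    "path A p (rev x1) p1" and "p2 \<in> trans A p1 \<sigma>" and "path A p2 (rev y) q"
    by (auto simp: path_append)
  moreover from this(1) have "p1 \<in> reach_modulo A I u"
    using p u by (auto simp: reach_modulo_def)
  ultimately show "q \<in> reach_within A I (post A (reach_modulo A I u) \<sigma>)"
    unfolding reach_within_def post_def by blast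
next
  fix q assume "q \<in> reach_within A I (post A (reach_modulo A I u) \<sigma>)"
  then obtain p x p' y where "p \<in> init A" "filter (\<lambda>a. a \<notin> I) x = u" "path A p x p'"
    "path A p' (\<sigma> # y) q" "set y \<subseteq> I"
    unfolding reach_within_def post_def reach_modulo_def by fastforce
  moreover from this(2,5) have "filter (\<lambda>a. a \<notin> I) (x @ \<sigma> # y) = u @ [\<sigma>]"
    using assms by (auto simp: filter_empty_conv)
  moreover have "path A p (x @ \<sigma> # y) q"
    using calculation(3,4) by (auto simp: path_append)
  ultimately show "q \<in> reach_modulo A I (u @ [\<sigma>])"
    unfolding reach_modulo_def by blast
qed

section \<open>Lasso normal forms\<close>

lemma range_iter: "w \<noteq> [] \<Longrightarrow> range (w\<^sup>\<omega>) = set w"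
  using limit_in_range[of "w\<^sup>\<omega>"] by (auto simp: iter_nth)

definition letter_cycle :: "'a set \<Rightarrow> 'a list" where
  "letter_cycle I = (SOME cs. set cs = I)"

lemma set_letter_cycle: "finite I \<Longrightarrow> set (letter_cycle I) = I"
  unfolding letter_cycle_def by (rule someI_ex) (rule finite_list)

definition lasso_lang :: "('a, 'q) automaton \<Rightarrow> 'a set \<Rightarrow> 'a word set" where
  "lasso_lang A I = {u \<frown> (letter_cycle I)\<^sup>\<omega> | u.
     set u \<subseteq> alph A - I \<and> reach_modulo A I u \<inter> fair_states A I \<noteq> {}}"

context
  fixes A :: "('a, 'q) automaton" and I :: "'a set"
  assumes finite_I: "finite I" and nonempty_I: "I \<noteq> {}"
begin

lemma letter_cycle_nonempty: "letter_cycle I \<noteq> []"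
  using set_letter_cycle[OF finite_I] nonempty_I by auto

lemma range_letter_cycle_iter: "range ((letter_cycle I)\<^sup>\<omega>) = I"
  unfolding range_iter[OF letter_cycle_nonempty] by (rule set_letter_cycle[OF finite_I])

lemma limit_letter_cycle_iter: "limit ((letter_cycle I)\<^sup>\<omega>) = I"
  using letter_cycle_nonempty set_letter_cycle[OF finite_I] by simp

lemma letter_cycle_iter_nth:
  "(letter_cycle I)\<^sup>\<omega> i = letter_cycle I ! (i mod length (letter_cycle I))"
  using letter_cycle_nonempty by simp

lemma letter_cycle_nth_mem: "letter_cycle I ! (i mod length (letter_cycle I)) \<in> I"
  using letter_cycle_nonempty set_letter_cycle[OF finite_I]
  by (metis nth_mem length_greater_0_conv mod_less_divisor)

lemma parikh_lasso_lang:
  assumes "I \<subseteq> alph A" and "w \<in> lasso_lang A I"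
  shows "parikh w \<in> parikh ` lang A"
proof -
  obtain u q where w: "w = u \<frown> (letter_cycle I)\<^sup>\<omega>" and u: "set u \<subseteq> alph A - I"
    and reach: "q \<in> reach_modulo A I u" and fair: "q \<in> fair_states A I"
    using assms(2) by (auto simp: lasso_lang_def)
  obtain p x where "p \<in> init A" and x: "filter (\<lambda>a. a \<notin> I) x = u" and "path A p x q"
    using reach by (auto simp: reach_modulo_def)
  moreover obtain t r where "r 0 = q" and "trans_run A t r" and t: "range t \<subseteq> I" "limit t = I"
    and "accepting A r"
    using fair by (auto simp: fair_states_def)
  ultimately obtain r' where "r' 0 = p" and "trans_run A (x \<frown> t) r'" and "accepting A r'"
    using path_conc_trans_run accepting_suffix by metis
  moreover have "set x \<subseteq> alph A"
  proof
    fix a assume "a \<in> set x"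
    then show "a \<in> alph A"
      using x u assms(1) by (cases "a \<in> I") (auto simp: filter_empty_conv)
  qed
  ultimately have "x \<frown> t \<in> lang A"
    using \<open>p \<in> init A\<close> t assms(1) by (auto simp: lang_def omega_words_def is_run_iff_trans_run)
  moreover have "parikh (x \<frown> t) = parikh w"
    unfolding w using t x u
    by (intro parikh_conc_eq) (auto simp: range_letter_cycle_iter limit_letter_cycle_iter)
  ultimately show ?thesis by (metis image_eqI)
qed

end

lemma parikh_lang_in_lasso_lang:
  assumes wf: "well_formed A" and "w \<in> lang A"
  obtains I where "I \<subseteq> alph A" and "I \<noteq> {}" and "parikh w \<in> parikh ` lasso_lang A I"
proof -
  obtain r where w: "w \<in> omega_words (alph A)" and "r 0 \<in> init A" and run: "trans_run A w r"
    and "accepting A r"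
    using \<open>w \<in> lang A\<close> by (auto simp: lang_def is_run_iff_trans_run)
  define I where "I = limit w"
  have "finite (range w)"
    using wf w finite_subset by (auto simp: omega_words_def well_formed_def)
  then obtain N where N: "I = range (suffix N w)" and "I \<noteq> {}"
    using limit_is_suffix[of w] limit_nonempty[of w] unfolding I_def by auto
  have "I \<subseteq> alph A"
    using N w by (auto simp: omega_words_def)
  then have "finite I"
    using well_formed_finite_subset[OF wf] by blast
  define u where "u = filter (\<lambda>a. a \<notin> I) (prefix N w)"
  have "limit (suffix N w) = I" by (simp add: I_def)
  then have "r N \<in> fair_states A I"
    unfolding fair_states_def
    using trans_run_suffix[OF run, of N] N \<open>accepting A r\<close> accepting_suffix[of A N r]
    by (intro CollectI exI[of _ "suffix N w"] exI[of _ "suffix N r"]) simp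
  moreover have "r N \<in> reach_modulo A I u"
    using \<open>r 0 \<in> init A\<close> trans_run_imp_path[OF run] by (auto simp: reach_modulo_def u_def)
  moreover have "set u \<subseteq> alph A - I"
    using w by (auto simp: u_def omega_words_def)
  ultimately have "u \<frown> (letter_cycle I)\<^sup>\<omega> \<in> lasso_lang A I"
    by (auto simp: lasso_lang_def)
  moreover have "parikh (u \<frown> (letter_cycle I)\<^sup>\<omega>) = parikh (prefix N w \<frown> suffix N w)"
  proof (rule parikh_conc_eq)
    show "range ((letter_cycle I)\<^sup>\<omega>) \<subseteq> I" "limit ((letter_cycle I)\<^sup>\<omega>) = I"
      using range_letter_cycle_iter limit_letter_cycle_iter \<open>finite I\<close> \<open>I \<noteq> {}\<close> by auto
    show "range (suffix N w) \<subseteq> I" "limit (suffix N w) = I"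
      using N \<open>limit (suffix N w) = I\<close> by simp_all
    show "filter (\<lambda>a. a \<notin> I) u = filter (\<lambda>a. a \<notin> I) (prefix N w)" by (simp add: u_def)
  qed
  ultimately have "parikh w \<in> parikh ` lasso_lang A I"
    unfolding prefix_suffix[of w N, symmetric] by (metis rev_image_eqI)
  then show thesis
    using that \<open>I \<subseteq> alph A\<close> \<open>I \<noteq> {}\<close> by blast
qed

section \<open>Deterministic automata recognising lassos\<close>

text \<open>
  \<open>Prefix S\<close>: while reading the prefix u of a lasso, with \<open>S = reach_modulo A I u\<close>;
  \<open>Cycle j\<close>: while reading \<open>(letter_cycle I)\<^sup>\<omega>\<close>, expecting its letter at position j;
  \<open>Dead\<close>: rejecting sink.
\<close>

datatype 'q phase = Prefix "'q set" | Cycle nat | Dead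

definition phase_step :: "('a, 'q) automaton \<Rightarrow> 'a set \<Rightarrow> 'q phase \<Rightarrow> 'a \<Rightarrow> 'q phase" where
  "phase_step A I s \<sigma> = (case s of
      Prefix S \<Rightarrow>
        if \<sigma> \<notin> I then Prefix (reach_within A I (post A S \<sigma>))
        else if \<sigma> = letter_cycle I ! 0 \<and> S \<inter> fair_states A I \<noteq> {}
        then Cycle (1 mod length (letter_cycle I)) else Dead
    | Cycle j \<Rightarrow>
        if \<sigma> = letter_cycle I ! j then Cycle (Suc j mod length (letter_cycle I)) else Dead
    | Dead \<Rightarrow> Dead)"

definition cycle_automaton :: "('a, 'q) automaton \<Rightarrow> 'a set \<Rightarrow> ('a, 'q phase) automaton" where
  "cycle_automaton A I = Automaton (alph A)
     (insert Dead (Prefix ` Pow (states A) \<union> Cycle ` {..<length (letter_cycle I)}))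
     (\<lambda>s \<sigma>. {phase_step A I s \<sigma>})
     {Prefix (reach_within A I (init A))}
     (Cycle ` {..<length (letter_cycle I)})"

lemma deterministic_cycle_automaton: "deterministic (cycle_automaton A I)"
  by (simp add: deterministic_def cycle_automaton_def)

lemma det_run_cycle_automaton_0:
    "det_run (cycle_automaton A I) w 0 = Prefix (reach_within A I (init A))"
  and det_run_cycle_automaton_Suc:
    "det_run (cycle_automaton A I) w (Suc i)
      = phase_step A I (det_run (cycle_automaton A I) w i) (w i)"
  by (simp_all add: det_run_0 det_run_Suc cycle_automaton_def)

lemma det_run_cycle_automaton_Prefix:
  "(\<forall>j<i. w j \<notin> I) \<Longrightarrow> det_run (cycle_automaton A I) w i = Prefix (reach_modulo A I (prefix i w))"
  by (induction i)
    (simp_all add: det_run_cycle_automaton_0 det_run_cycle_automaton_Suc reach_modulo_Nil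
      reach_modulo_snoc phase_step_def)

lemma det_run_cycle_automaton_Dead:
  assumes "det_run (cycle_automaton A I) w i = Dead" and "i \<le> j"
  shows "det_run (cycle_automaton A I) w j = Dead"
  using assms(2)
  by (induction j rule: dec_induct)
    (simp_all add: assms(1) det_run_cycle_automaton_Suc phase_step_def)

context
  fixes A :: "('a, 'q) automaton" and I :: "'a set"
  assumes wf: "well_formed A" and letters: "I \<subseteq> alph A" and nonempty_I: "I \<noteq> {}"
begin

private lemmas finite_I = well_formed_finite_subset[OF wf letters]

lemma well_formed_cycle_automaton: "well_formed (cycle_automaton A I)"
proof -
  have "reach_within A I (post A S \<sigma>) \<subseteq> states A" if "S \<subseteq> states A" and "\<sigma> \<in> alph A" for S \<sigma>
    using reach_within_subset[OF wf post_subset[OF wf that] letters] .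
  moreover have "reach_within A I (init A) \<subseteq> states A"
    using wf letters by (intro reach_within_subset) (auto simp: well_formed_def)
  moreover have "phase_step A I s \<sigma> \<in> states (cycle_automaton A I)"
    if "s \<in> states (cycle_automaton A I)" and "\<sigma> \<in> alph A" for s \<sigma>
  proof -
    have "0 < length (letter_cycle I)"
      using letter_cycle_nonempty[OF finite_I nonempty_I] by simp
    then show ?thesis
      using that calculation(1)
      by (cases s)
        (auto simp: cycle_automaton_def phase_step_def image_iff simp del: length_greater_0_conv)
  qed
  ultimately show ?thesis
    using wf by (auto simp: well_formed_def cycle_automaton_def)
qed

lemma det_run_cycle_automaton_Cycle:
  assumes run: "det_run (cycle_automaton A I) w n = Prefix S" and fair: "S \<inter> fair_states A I \<noteq> {}"
    and cycle: "suffix n w = (letter_cycle I)\<^sup>\<omega>"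
  shows "det_run (cycle_automaton A I) w (Suc n + j) = Cycle (Suc j mod length (letter_cycle I))"
proof (induction j)
  case 0
  have "w n = letter_cycle I ! 0"
    using fun_cong[OF cycle, of 0] by (simp add: letter_cycle_iter_nth[OF finite_I nonempty_I])
  then show ?case
    using run fair letter_cycle_nth_mem[OF finite_I nonempty_I, of 0]
    by (simp add: det_run_cycle_automaton_Suc phase_step_def)
next
  case (Suc j)
  have "w (n + Suc j) = letter_cycle I ! (Suc j mod length (letter_cycle I))"
    using fun_cong[OF cycle, of "Suc j"]
    by (simp add: letter_cycle_iter_nth[OF finite_I nonempty_I])
  then show ?case
    using Suc by (simp add: det_run_cycle_automaton_Suc phase_step_def mod_Suc_eq)
qed

lemma det_run_cycle_automaton_suffix:
  assumes alive: "\<And>i. det_run (cycle_automaton A I) w i \<noteq> Dead"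
    and start: "det_run (cycle_automaton A I) w (Suc n) = Cycle (Suc 0 mod length (letter_cycle I))"
    and first: "w n = letter_cycle I ! 0"
  shows "suffix n w = (letter_cycle I)\<^sup>\<omega>"
proof -
  let ?\<rho> = "det_run (cycle_automaton A I) w" and ?k = "length (letter_cycle I)"
  have "w (n + j) = letter_cycle I ! (j mod ?k) \<and> ?\<rho> (Suc n + j) = Cycle (Suc j mod ?k)" for j
  proof (induction j)
    case 0
    show ?case using first start by simp
  next
    case (Suc j)
    have "?\<rho> (Suc n + Suc j) = phase_step A I (?\<rho> (Suc n + j)) (w (n + Suc j))"
      using det_run_cycle_automaton_Suc[of A I w "Suc n + j"] by simp
    also have "\<dots> = phase_step A I (Cycle (Suc j mod ?k)) (w (n + Suc j))"
      using Suc by simp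
    finally show ?case
      using alive[of "Suc n + Suc j"] by (auto simp: phase_step_def mod_Suc_eq split: if_splits)
  qed
  then show ?thesis
    by (simp add: fun_eq_iff letter_cycle_iter_nth[OF finite_I nonempty_I])
qed

lemma lasso_of_accepting_det_run:
  assumes "accepting (cycle_automaton A I) (det_run (cycle_automaton A I) w)"
  obtains n where "\<forall>i<n. w i \<notin> I" and "reach_modulo A I (prefix n w) \<inter> fair_states A I \<noteq> {}"
    and "suffix n w = (letter_cycle I)\<^sup>\<omega>"
proof -
  let ?\<rho> = "det_run (cycle_automaton A I) w"
  have acc: "\<exists>\<^sub>\<infinity>i. \<exists>j. ?\<rho> i = Cycle j"
    using assms by (auto simp: accepting_def cycle_automaton_def elim!: INFM_mono)
  have alive: "?\<rho> i \<noteq> Dead" for i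
  proof
    assume "?\<rho> i = Dead"
    moreover obtain j c where "j > i" and "?\<rho> j = Cycle c"
      using acc unfolding INFM_nat by blast
    ultimately show False using det_run_cycle_automaton_Dead[of A I w i j] by simp
  qed
  have "\<exists>n. w n \<in> I"
  proof (rule ccontr)
    assume "\<nexists>n. w n \<in> I"
    then have "?\<rho> i = Prefix (reach_modulo A I (prefix i w))" for i
      using det_run_cycle_automaton_Prefix by blast
    then show False using INFM_EX[OF acc] by simp
  qed
  define n where "n = (LEAST n. w n \<in> I)"
  have "w n \<in> I" and prefix: "\<forall>i<n. w i \<notin> I"
    using LeastI_ex[OF \<open>\<exists>n. w n \<in> I\<close>] not_less_Least by (auto simp: n_def)
  define S where "S = reach_modulo A I (prefix n w)"
  have "?\<rho> (Suc n) = phase_step A I (Prefix S) (w n)"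
    using det_run_cycle_automaton_Prefix[where A = A, OF prefix]
    by (simp add: det_run_cycle_automaton_Suc S_def)
  then have "w n = letter_cycle I ! 0" and "S \<inter> fair_states A I \<noteq> {}"
    and "?\<rho> (Suc n) = Cycle (Suc 0 mod length (letter_cycle I))"
    using alive[of "Suc n"] \<open>w n \<in> I\<close> by (auto simp: phase_step_def split: if_splits)
  then show thesis
    using that prefix det_run_cycle_automaton_suffix[OF alive] by (simp add: S_def)
qed

lemma accepting_det_run_cycle_automaton_lasso:
  assumes u: "set u \<subseteq> alph A - I" and fair: "reach_modulo A I u \<inter> fair_states A I \<noteq> {}"
  shows "accepting (cycle_automaton A I) (det_run (cycle_automaton A I) (u \<frown> (letter_cycle I)\<^sup>\<omega>))"
proof -
  let ?\<rho> = "det_run (cycle_automaton A I) (u \<frown> (letter_cycle I)\<^sup>\<omega>)"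
  have "\<forall>i<length u. (u \<frown> (letter_cycle I)\<^sup>\<omega>) i \<notin> I"
    using u nth_mem by fastforce
  then have "?\<rho> (length u) = Prefix (reach_modulo A I u)"
    using det_run_cycle_automaton_Prefix[where A = A] by simp
  then have "?\<rho> (Suc (length u) + j) \<in> acc (cycle_automaton A I)" for j
    using det_run_cycle_automaton_Cycle fair letter_cycle_nonempty[OF finite_I nonempty_I]
    by (simp add: cycle_automaton_def)
  then show ?thesis
    unfolding accepting_def INFM_nat by (metis add_Suc less_add_Suc2)
qed

lemma lang_cycle_automaton: "lang (cycle_automaton A I) = lasso_lang A I"
proof -
  have "lang (cycle_automaton A I) =
      {w \<in> omega_words (alph A). accepting (cycle_automaton A I) (det_run (cycle_automaton A I) w)}"
    using lang_deterministic[OF well_formed_cycle_automaton deterministic_cycle_automaton]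
    by (simp add: cycle_automaton_def)
  also have "\<dots> = lasso_lang A I"
  proof (intro set_eqI iffI)
    fix w assume "w \<in> {w \<in> omega_words (alph A).
      accepting (cycle_automaton A I) (det_run (cycle_automaton A I) w)}"
    then obtain n where "w \<in> omega_words (alph A)" and "\<forall>i<n. w i \<notin> I"
      and "reach_modulo A I (prefix n w) \<inter> fair_states A I \<noteq> {}"
      and "suffix n w = (letter_cycle I)\<^sup>\<omega>"
      using lasso_of_accepting_det_run by blast
    moreover have "w = prefix n w \<frown> (letter_cycle I)\<^sup>\<omega>"
      using prefix_suffix[of w n] \<open>suffix n w = (letter_cycle I)\<^sup>\<omega>\<close> by simp
    moreover have "set (prefix n w) \<subseteq> alph A - I"
      using \<open>w \<in> omega_words (alph A)\<close> \<open>\<forall>i<n. w i \<notin> I\<close> by (auto simp: omega_words_def)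
    ultimately show "w \<in> lasso_lang A I"
      unfolding lasso_lang_def by blast
  next
    fix w assume "w \<in> lasso_lang A I"
    then obtain u where w: "w = u \<frown> (letter_cycle I)\<^sup>\<omega>" and u: "set u \<subseteq> alph A - I"
      and fair: "reach_modulo A I u \<inter> fair_states A I \<noteq> {}"
      by (auto simp: lasso_lang_def)
    have "w \<in> omega_words (alph A)"
      using u letters range_letter_cycle_iter[OF finite_I nonempty_I]
      by (auto simp: w omega_words_def)
    then show "w \<in> {w \<in> omega_words (alph A).
      accepting (cycle_automaton A I) (det_run (cycle_automaton A I) w)}"
      using accepting_det_run_cycle_automaton_lasso[OF u fair] by (simp add: w)
  qed
  finally show ?thesis .
qed

end

lemma parikh_image_lasso_langs:
  assumes wf: "well_formed A"
  shows "parikh ` (\<Union>I\<in>{I. I \<subseteq> alph A \<and> I \<noteq> {}}. lasso_lang A I) = parikh ` lang A"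
proof (intro subset_antisym subsetI)
  fix v assume "v \<in> parikh ` (\<Union>I\<in>{I. I \<subseteq> alph A \<and> I \<noteq> {}}. lasso_lang A I)"
  then obtain I w where "I \<subseteq> alph A" "I \<noteq> {}" "w \<in> lasso_lang A I" "v = parikh w"
    by blast
  moreover have "finite I"
    using well_formed_finite_subset[OF wf \<open>I \<subseteq> alph A\<close>] .
  ultimately show "v \<in> parikh ` lang A"
    using parikh_lasso_lang by blast
next
  fix v assume "v \<in> parikh ` lang A"
  then obtain w where "w \<in> lang A" and "v = parikh w" by blast
  then obtain I where "I \<subseteq> alph A" "I \<noteq> {}" "v \<in> parikh ` lasso_lang A I"
    using parikh_lang_in_lasso_lang[OF wf] by metis
  then show "v \<in> parikh ` (\<Union>I\<in>{I. I \<subseteq> alph A \<and> I \<noteq> {}}. lasso_lang A I)"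
    by blast
qed

definition lasso_automaton :: "('a, 'q) automaton \<Rightarrow> ('a, 'a set \<Rightarrow> 'q phase) automaton" where
  "lasso_automaton A = prod_automaton (alph A) {I. I \<subseteq> alph A \<and> I \<noteq> {}} (cycle_automaton A)"

lemma deterministic_lasso_automaton: "deterministic (lasso_automaton A)"
  by (simp add: lasso_automaton_def deterministic_prod_automaton)

lemma alph_lasso_automaton: "alph (lasso_automaton A) = alph A"
  by (simp add: lasso_automaton_def prod_automaton_def)

context
  fixes A :: "('a, 'q) automaton"
  assumes wf: "well_formed A"
begin

private lemma lasso_automaton_components:
  "I \<in> {I. I \<subseteq> alph A \<and> I \<noteq> {}} \<Longrightarrow> well_formed (cycle_automaton A I)
     \<and> deterministic (cycle_automaton A I) \<and> alph (cycle_automaton A I) = alph A"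
  using well_formed_cycle_automaton[OF wf] deterministic_cycle_automaton
  by (simp add: cycle_automaton_def)

private lemma finite_alph: "finite (alph A)" "finite {I. I \<subseteq> alph A \<and> I \<noteq> {}}"
  using wf by (simp_all add: well_formed_def)

lemma well_formed_lasso_automaton: "well_formed (lasso_automaton A)"
  unfolding lasso_automaton_def
  by (rule well_formed_prod_automaton[where D = "cycle_automaton A",
        OF finite_alph lasso_automaton_components])

lemma parikh_image_lang_lasso_automaton: "parikh ` lang (lasso_automaton A) = parikh ` lang A"
proof -
  have "lang (lasso_automaton A) = (\<Union>I\<in>{I. I \<subseteq> alph A \<and> I \<noteq> {}}. lang (cycle_automaton A I))"
    unfolding lasso_automaton_def
    by (rule lang_prod_automaton[where D = "cycle_automaton A",
          OF finite_alph lasso_automaton_components])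
  also have "\<dots> = (\<Union>I\<in>{I. I \<subseteq> alph A \<and> I \<noteq> {}}. lasso_lang A I)"
    by (rule SUP_cong[OF refl]) (simp add: lang_cycle_automaton[OF wf])
  finally show ?thesis
    by (simp only: parikh_image_lasso_langs[OF wf])
qed

end

theorem proposition3:
  fixes A :: "('a, 'q) automaton"
  assumes "well_formed A"
  shows "\<exists>D :: ('a, nat) automaton. well_formed D \<and> alph D = alph A \<and> deterministic D
           \<and> jumping_lang A = jumping_lang D"
proof -
  obtain D :: "('a, nat) automaton" where "well_formed D" and "deterministic D"
    and alph: "alph D = alph A" and lang: "lang D = lang (lasso_automaton A)"
    using deterministic_nat_states[OF well_formed_lasso_automaton[OF assms]
        deterministic_lasso_automaton]
    unfolding alph_lasso_automaton .
  moreover have "jumping_lang A = jumping_lang D"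
    unfolding jumping_lang_eq_parikh_image alph lang parikh_image_lang_lasso_automaton[OF assms]
    by (rule refl)
  ultimately show ?thesis by blast
qed

end
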